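(* For the complete graph $K_6$, with $\Pi_1,\dots,\Pi_{10}$ its pairs of disjoint odd cycles (triangles), there is no choice of edges $b^1,\dots,b^{10}$ with $b^i$ a bridge of $\Pi_i$ such that: for each $i$, the even closed walk $E_i$ of $b^i$ in $\Pi_i$ contains at most $2$ edges of $\{b^1,\dots,b^{10}\}\setminus\{b^i\}$, and the number of indices $i$ for which $E_i$ contains exactly $2$ edges of $\{b^1,\dots,b^{10}\}\setminus\{b^i\}$ is at most $2$.
   Context: Two odd cycles are disjoint if they have no common vertex. A bridge of a pair $(C,C')$ of disjoint odd cycles is an edge with one endpoint on $C$ and the other on $C'$. For a bridge $b=\{u,v\}$ of $(C,C')$ with $u\in C$, $v\in C'$, the even closed walk of $b$ in $(C,C')$ is the closed walk obtained by traversing $C$ once starting and ending at $u$, then $b$ from $u$ to $v$, then traversing $C'$ once starting and ending at $v$, then $b$ back from $v$ to $u$. An edge is contained in the walk if it occurs in it. *)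

theory Defs
  imports Main
begin

definition K6_V :: "nat set" where
  "K6_V = {0..<6}"

definition K6_E :: "nat set set" where
  "K6_E = {{x, y} | x y. x \<in> K6_V \<and> y \<in> K6_V \<and> x \<noteq> y}"

text \<open>A triangle (odd cycle of length 3) of K6, given by its vertex set.\<close>
definition triangle :: "nat set \<Rightarrow> bool" where
  "triangle C \<longleftrightarrow> C \<subseteq> K6_V \<and> card C = 3"

definition tri_edges :: "nat set \<Rightarrow> nat set set" where
  "tri_edges C = {{x, y} | x y. x \<in> C \<and> y \<in> C \<and> x \<noteq> y}"

text \<open>Unordered pairs of disjoint triangles of K6 (there are 10 of them).\<close>
definition tri_pairs :: "nat set set set" where
  "tri_pairs = {{C, C'} | C C'. triangle C \<and> triangle C' \<and> C \<inter> C' = {}}"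

definition is_bridge :: "nat set set \<Rightarrow> nat set \<Rightarrow> bool" where
  "is_bridge P e \<longleftrightarrow> (\<exists>C C' u v. P = {C, C'} \<and> u \<in> C \<and> v \<in> C' \<and> e = {u, v})"

text \<open>Edges occurring in the even closed walk of bridge b in the pair P:
  all edges of both cycles together with b.\<close>
definition walk_edges :: "nat set set \<Rightarrow> nat set \<Rightarrow> nat set set" where
  "walk_edges P b = (\<Union>C\<in>P. tri_edges C) \<union> {b}"

end

theory Submission
  imports Defs
begin

text \<open>A bridge of a pair never lies on one of its two triangles, so the edges of
  the other chosen bridges met by the walk of b P are exactly the chosen edges on
  the triangles of P. In K6 any two edges lie on the triangles of a common pair:
  extend one of them to a triangle that contains the other edge or avoids it, and
  complete with the complementary triangle. Hence if three distinct edges are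
  chosen, each two of them force a pair whose walk meets exactly two other bridges,
  and these three pairs are distinct since no walk meets three; if at most two distinct edges are chosen, some pair has
  all of them, including its own bridge, on its triangles.\<close>

definition pair_cycle_edges :: "nat set set \<Rightarrow> nat set set" where
  "pair_cycle_edges P = (\<Union>C\<in>P. tri_edges C)"

lemma pairwise_covered_choice_impossible:
  fixes b :: "'i \<Rightarrow> 'e" and T :: "'i \<Rightarrow> 'e set"
  assumes "finite I" "I \<noteq> {}"
    and own_not_covered: "\<And>P. P \<in> I \<Longrightarrow> b P \<notin> T P"
    and pairwise_covered: "\<And>e e'. e \<in> b ` I \<Longrightarrow> e' \<in> b ` I \<Longrightarrow> \<exists>P\<in>I. e \<in> T P \<and> e' \<in> T P"
    and at_most_two: "\<And>P. P \<in> I \<Longrightarrow> card (T P \<inter> b ` I) \<le> 2"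
    and few_saturated: "card {P \<in> I. card (T P \<inter> b ` I) = 2} \<le> 2"
  shows False
proof -
  define B where "B = b ` I"
  have "finite B" using \<open>finite I\<close> by (simp add: B_def)
  note covered = pairwise_covered[folded B_def]
    and at_most_two = at_most_two[folded B_def]
    and few_saturated = few_saturated[folded B_def]
  show False
  proof (cases "\<exists>e1\<in>B. \<exists>e2\<in>B. \<exists>e3\<in>B. e1 \<noteq> e2 \<and> e1 \<noteq> e3 \<and> e2 \<noteq> e3")
    case True
    then obtain e1 e2 e3 where e: "e1 \<in> B" "e2 \<in> B" "e3 \<in> B"
      and distinct: "e1 \<noteq> e2" "e1 \<noteq> e3" "e2 \<noteq> e3"
      by blast
    have card_ge: "card S \<le> card (T P \<inter> B)" if "S \<subseteq> T P \<inter> B" for S P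
      using that \<open>finite B\<close> by (intro card_mono) auto
    have not_all_three: "\<not> (e1 \<in> T P \<and> e2 \<in> T P \<and> e3 \<in> T P)" if "P \<in> I" for P
      using card_ge[of "{e1, e2, e3}" P] at_most_two[OF that] e distinct by auto
    have saturated: "P \<in> {P \<in> I. card (T P \<inter> B) = 2}"
      if "P \<in> I" "x \<in> T P" "y \<in> T P" "x \<in> B" "y \<in> B" "x \<noteq> y" for P x y
      using card_ge[of "{x, y}" P] at_most_two[OF that(1)] that by auto
    obtain P12 where P12: "P12 \<in> I" "e1 \<in> T P12" "e2 \<in> T P12" using covered e by blast
    obtain P13 where P13: "P13 \<in> I" "e1 \<in> T P13" "e3 \<in> T P13" using covered e by blast
    obtain P23 where P23: "P23 \<in> I" "e2 \<in> T P23" "e3 \<in> T P23" using covered e by blast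
    have "P12 \<noteq> P13" "P12 \<noteq> P23" "P13 \<noteq> P23"
      using not_all_three P12 P13 P23 by blast+
    then have "3 = card {P12, P13, P23}" by simp
    also have "\<dots> \<le> card {P \<in> I. card (T P \<inter> B) = 2}"
      using saturated[OF P12 e(1,2) distinct(1)] saturated[OF P13 e(1,3) distinct(2)]
        saturated[OF P23 e(2,3) distinct(3)] \<open>finite I\<close>
      by (intro card_mono) auto
    finally show False using few_saturated by simp
  next
    case False
    obtain P0 where "P0 \<in> I" using \<open>I \<noteq> {}\<close> by blast
    then have "b P0 \<in> B" by (simp add: B_def)
    obtain e2 where "e2 \<in> B" and two_values: "B \<subseteq> {b P0, e2}"
    proof (cases "B \<subseteq> {b P0}")
      case True
      then show ?thesis using that \<open>b P0 \<in> B\<close> by blast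
    next
      case not_single: False
      then obtain e2 where "e2 \<in> B" "e2 \<noteq> b P0" by blast
      then show ?thesis using that False \<open>b P0 \<in> B\<close> by blast
    qed
    then obtain P where "P \<in> I" "b P0 \<in> T P" "e2 \<in> T P"
      using covered \<open>b P0 \<in> B\<close> by blast
    then have "b P \<in> T P" using two_values by (auto simp: B_def)
    then show False using own_not_covered \<open>P \<in> I\<close> by blast
  qed
qed

lemma walk_edges_inter_other_edges:
  assumes "e \<notin> pair_cycle_edges P"
  shows "walk_edges P e \<inter> (B - {e}) = pair_cycle_edges P \<inter> B"
  using assms by (auto simp: walk_edges_def pair_cycle_edges_def)

lemma finite_tri_pairs: "finite tri_pairs"
proof -
  have "tri_pairs \<subseteq> Pow (Pow K6_V)"
    unfolding tri_pairs_def triangle_def by auto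
  then show ?thesis by (rule finite_subset) (simp add: K6_V_def)
qed

lemma doubleton_in_tri_edges: "p \<in> C \<Longrightarrow> q \<in> C \<Longrightarrow> p \<noteq> q \<Longrightarrow> {p, q} \<in> tri_edges C"
  unfolding tri_edges_def by blast

lemma complement_triangle_in_tri_pairs:
  assumes "triangle C"
  shows "{C, K6_V - C} \<in> tri_pairs"
proof -
  have "card (K6_V - C) = 3"
    using assms unfolding triangle_def K6_V_def by (subst card_Diff_subset) (auto intro: finite_subset)
  then have "triangle (K6_V - C)" by (simp add: triangle_def)
  then show ?thesis using assms unfolding tri_pairs_def by blast
qed

lemma tri_pairs_nonempty: "tri_pairs \<noteq> {}"
proof -
  have "triangle {0, 1, 2}" by (simp add: triangle_def K6_V_def)
  then show ?thesis using complement_triangle_in_tri_pairs by blast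
qed

lemma bridge_not_in_pair_cycle_edges:
  assumes "P \<in> tri_pairs" "is_bridge P e"
  shows "e \<notin> pair_cycle_edges P"
proof
  obtain C C' u v where b: "P = {C, C'}" "u \<in> C" "v \<in> C'" "e = {u, v}"
    using assms(2) unfolding is_bridge_def by blast
  have disjoint: "C \<inter> C' = {}"
    using assms(1) b(1) unfolding tri_pairs_def by (auto simp: doubleton_eq_iff)
  assume "e \<in> pair_cycle_edges P"
  then obtain X x y where "X \<in> P" "x \<in> X" "y \<in> X" "e = {x, y}"
    unfolding pair_cycle_edges_def tri_edges_def by blast
  then show False using b disjoint by (auto simp: doubleton_eq_iff)
qed

lemma bridge_in_K6_E:
  assumes "P \<in> tri_pairs" "is_bridge P e"
  shows "e \<in> K6_E"
proof -
  obtain C C' u v where b: "P = {C, C'}" "u \<in> C" "v \<in> C'" "e = {u, v}"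
    using assms(2) unfolding is_bridge_def by blast
  have "C \<inter> C' = {}" "C \<subseteq> K6_V" "C' \<subseteq> K6_V"
    using assms(1) b(1) unfolding tri_pairs_def triangle_def by (auto simp: doubleton_eq_iff)
  then show ?thesis using b unfolding K6_E_def by blast
qed

lemma exists_vertex_outside:
  assumes "finite S" "card S < 6"
  shows "\<exists>x\<in>K6_V. x \<notin> S"
proof (rule ccontr)
  assume "\<not> ?thesis"
  then have "card K6_V \<le> card S" using assms(1) by (intro card_mono) auto
  then show False using assms(2) by (simp add: K6_V_def)
qed

lemma third_vertex_separating:
  assumes "c \<in> K6_V" "d \<in> K6_V"
  shows "\<exists>x\<in>K6_V. x \<notin> {u, v} \<and> (c \<in> {u, v, x} \<longleftrightarrow> d \<in> {u, v, x})"
proof (cases "c \<in> {u, v} \<longleftrightarrow> d \<in> {u, v}")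
  case True
  have "card {u, v, c, d} < 6" using card_length[of "[u, v, c, d]"] by simp
  then obtain x where "x \<in> K6_V" "x \<notin> {u, v, c, d}"
    using exists_vertex_outside[of "{u, v, c, d}"] by auto
  then show ?thesis using True by (intro bexI[of _ x]) auto
next
  case False
  then show ?thesis using assms by (intro bexI[of _ "if c \<in> {u, v} then d else c"]) auto
qed

lemma K6_edges_in_common_pair:
  assumes "e \<in> K6_E" "e' \<in> K6_E"
  shows "\<exists>P\<in>tri_pairs. e \<in> pair_cycle_edges P \<and> e' \<in> pair_cycle_edges P"
proof -
  obtain u v where uv: "e = {u, v}" "u \<in> K6_V" "v \<in> K6_V" "u \<noteq> v"
    using assms(1) unfolding K6_E_def by blast
  obtain c d where cd: "e' = {c, d}" "c \<in> K6_V" "d \<in> K6_V" "c \<noteq> d"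
    using assms(2) unfolding K6_E_def by blast
  obtain x where x: "x \<in> K6_V" "x \<notin> {u, v}" "c \<in> {u, v, x} \<longleftrightarrow> d \<in> {u, v, x}"
    using third_vertex_separating[OF cd(2,3)] by blast
  define C where "C = {u, v, x}"
  have "triangle C" using uv x by (simp add: C_def triangle_def)
  then have P: "{C, K6_V - C} \<in> tri_pairs" by (rule complement_triangle_in_tri_pairs)
  have "e \<in> tri_edges C" using uv by (simp add: C_def doubleton_in_tri_edges)
  moreover have "e' \<in> tri_edges C \<or> e' \<in> tri_edges (K6_V - C)"
    using x cd by (auto simp: C_def intro: doubleton_in_tri_edges)
  ultimately show ?thesis using P unfolding pair_cycle_edges_def by (intro bexI[OF _ P]) auto
qed

lemma no_bridge_choice_with_few_double_hits:
  assumes bridge: "\<forall>P\<in>tri_pairs. is_bridge P (b P)"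
    and at_most_two: "\<forall>P\<in>tri_pairs. card (walk_edges P (b P) \<inter> (b ` tri_pairs - {b P})) \<le> 2"
    and few: "card {P \<in> tri_pairs. card (walk_edges P (b P) \<inter> (b ` tri_pairs - {b P})) = 2} \<le> 2"
  shows False
proof -
  have own: "b P \<notin> pair_cycle_edges P" if "P \<in> tri_pairs" for P
    using bridge that by (simp add: bridge_not_in_pair_cycle_edges)
  have walk: "walk_edges P (b P) \<inter> (b ` tri_pairs - {b P}) = pair_cycle_edges P \<inter> b ` tri_pairs"
    if "P \<in> tri_pairs" for P
    using own[OF that] by (rule walk_edges_inter_other_edges)
  show False
  proof (rule pairwise_covered_choice_impossible[OF finite_tri_pairs tri_pairs_nonempty own])
    show "\<exists>P\<in>tri_pairs. e \<in> pair_cycle_edges P \<and> e' \<in> pair_cycle_edges P"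
      if "e \<in> b ` tri_pairs" "e' \<in> b ` tri_pairs" for e e'
      using that bridge by (blast intro: K6_edges_in_common_pair bridge_in_K6_E)
    show "card (pair_cycle_edges P \<inter> b ` tri_pairs) \<le> 2" if "P \<in> tri_pairs" for P
      using at_most_two walk that by simp
    have "{P \<in> tri_pairs. card (pair_cycle_edges P \<inter> b ` tri_pairs) = 2}
        = {P \<in> tri_pairs. card (walk_edges P (b P) \<inter> (b ` tri_pairs - {b P})) = 2}"
      using walk by auto
    then show "card {P \<in> tri_pairs. card (pair_cycle_edges P \<inter> b ` tri_pairs) = 2} \<le> 2"
      using few by simp
  qed
qed

theorem theorem3p3:
  "\<not> (\<exists>b :: nat set set \<Rightarrow> nat set.
        (\<forall>P\<in>tri_pairs. is_bridge P (b P)) \<and>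
        (\<forall>P\<in>tri_pairs. card (walk_edges P (b P) \<inter> (b ` tri_pairs - {b P})) \<le> 2) \<and>
        card {P \<in> tri_pairs. card (walk_edges P (b P) \<inter> (b ` tri_pairs - {b P})) = 2} \<le> 2)"
  using no_bridge_choice_with_few_double_hits by blast

end
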